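(* Let $(X,Y)$ be a splitting of a finite Weyl group $W$, and let $x_0\in X$ and $y_0\in Y$ be the unique maximal elements of $X$ in left weak order and of $Y$ in right weak order respectively (so that $x_0y_0=w_0$). Define $\varphi,\psi:W\to W$ by $\varphi(u)=ux_0^{-1}$ and $\psi(u)=w_0y_0^{-1}uw_0=x_0uw_0$. Then $(\varphi(X),\psi(Y))$ is also a splitting of $W$, and its left-maximal and right-maximal elements are $x_0^{-1}$ and $x_0w_0=w_0y_0^{-1}w_0$ respectively.
   Context: $W$ is the Weyl group of a finite crystallographic root system, with Coxeter length $\ell$ and longest element $w_0$. Left weak order: $v\leq_L w$ iff $w=zv$ with $\ell(w)=\ell(z)+\ell(v)$; right weak order: $v\leq_R w$ iff $w=vz$ with $\ell(w)=\ell(v)+\ell(z)$. A pair $(X,Y)$ of subsets of $W$ is a splitting of $W$ if the map $X\times Y\to W$, $(x,y)\mapsto xy$, is a bijection with $\ell(xy)=\ell(x)+\ell(y)$ for all $x\in X,y\in Y$. For any splitting, $X$ has a unique maximal element in left weak order and $Y$ has a unique maximal element in right weak order, and their product is $w_0$. *)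

theory Defs
  imports "HOL-Analysis.Analysis"
begin

definition root_refl :: "'a::euclidean_space \<Rightarrow> 'a \<Rightarrow> 'a" where
  "root_refl \<alpha> v = v - (2 * (v \<bullet> \<alpha>) / (\<alpha> \<bullet> \<alpha>)) *\<^sub>R \<alpha>"

definition crystallographic_root_system :: "'a::euclidean_space set \<Rightarrow> bool" where
  "crystallographic_root_system R \<longleftrightarrow>
     finite R \<and> 0 \<notin> R \<and>
     (\<forall>\<alpha>\<in>R. root_refl \<alpha> ` R \<subseteq> R) \<and>
     (\<forall>\<alpha>\<in>R. \<forall>\<beta>\<in>R. 2 * (\<beta> \<bullet> \<alpha>) / (\<alpha> \<bullet> \<alpha>) \<in> \<int>) \<and>
     (\<forall>\<alpha>\<in>R. \<forall>c::real. c *\<^sub>R \<alpha> \<in> R \<longrightarrow> c = 1 \<or> c = -1)"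

inductive_set weyl_group :: "'a::euclidean_space set \<Rightarrow> ('a \<Rightarrow> 'a) set" for R where
  weyl_id: "id \<in> weyl_group R"
| weyl_step: "\<alpha> \<in> R \<Longrightarrow> w \<in> weyl_group R \<Longrightarrow> root_refl \<alpha> \<circ> w \<in> weyl_group R"

text \<open>A positive system is cut out by a vector c that is not orthogonal to any root.\<close>
definition generic_vector :: "'a::euclidean_space set \<Rightarrow> 'a \<Rightarrow> bool" where
  "generic_vector R c \<longleftrightarrow> (\<forall>\<alpha>\<in>R. c \<bullet> \<alpha> \<noteq> 0)"

definition positive_roots :: "'a::euclidean_space set \<Rightarrow> 'a \<Rightarrow> 'a set" where
  "positive_roots R c = {\<alpha>\<in>R. c \<bullet> \<alpha> > 0}"

definition simple_roots :: "'a::euclidean_space set \<Rightarrow> 'a \<Rightarrow> 'a set" where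
  "simple_roots R c = {\<alpha>\<in>positive_roots R c.
      \<not> (\<exists>\<beta>\<in>positive_roots R c. \<exists>\<gamma>\<in>positive_roots R c. \<alpha> = \<beta> + \<gamma>)}"

definition coxeter_length :: "'a::euclidean_space set \<Rightarrow> 'a \<Rightarrow> ('a \<Rightarrow> 'a) \<Rightarrow> nat" where
  "coxeter_length R c w = (LEAST n. \<exists>ss. length ss = n \<and> set ss \<subseteq> simple_roots R c \<and>
       w = foldr (\<lambda>\<alpha> f. root_refl \<alpha> \<circ> f) ss id)"

definition longest_element :: "'a::euclidean_space set \<Rightarrow> 'a \<Rightarrow> ('a \<Rightarrow> 'a)" where
  "longest_element R c = (THE w0. w0 \<in> weyl_group R \<and>
      (\<forall>w\<in>weyl_group R. coxeter_length R c w \<le> coxeter_length R c w0))"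

definition left_weak_le :: "'a::euclidean_space set \<Rightarrow> 'a \<Rightarrow> ('a \<Rightarrow> 'a) \<Rightarrow> ('a \<Rightarrow> 'a) \<Rightarrow> bool" where
  "left_weak_le R c v w \<longleftrightarrow> (\<exists>z\<in>weyl_group R. w = z \<circ> v \<and>
      coxeter_length R c w = coxeter_length R c z + coxeter_length R c v)"

definition right_weak_le :: "'a::euclidean_space set \<Rightarrow> 'a \<Rightarrow> ('a \<Rightarrow> 'a) \<Rightarrow> ('a \<Rightarrow> 'a) \<Rightarrow> bool" where
  "right_weak_le R c v w \<longleftrightarrow> (\<exists>z\<in>weyl_group R. w = v \<circ> z \<and>
      coxeter_length R c w = coxeter_length R c v + coxeter_length R c z)"

definition splitting :: "'a::euclidean_space set \<Rightarrow> 'a \<Rightarrow> ('a \<Rightarrow> 'a) set \<Rightarrow> ('a \<Rightarrow> 'a) set \<Rightarrow> bool" where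
  "splitting R c X Y \<longleftrightarrow> X \<subseteq> weyl_group R \<and> Y \<subseteq> weyl_group R \<and>
      bij_betw (\<lambda>(x, y). x \<circ> y) (X \<times> Y) (weyl_group R) \<and>
      (\<forall>x\<in>X. \<forall>y\<in>Y. coxeter_length R c (x \<circ> y) = coxeter_length R c x + coxeter_length R c y)"

end

theory Submission
  imports Defs
begin

(* The Coxeter length of w equals the number of positive roots that w makes negative. Hence the
   longest element w0 is the unique element sending every positive root to a negative one; it is
   an involution, and l(u w0) = l(w0) - l(u) = l(w0 u) for every u, so that right multiplication
   by w0 reverses the right weak order.
   Write w0 = x y with x in X and y in Y. Then l(w0) = l(x) + l(y) <= l(x0) + l(y0) = l(x0 y0),
   so x0 y0 = w0. The products (x x0^-1)(x0 y w0) = x y w0 run bijectively through W, because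
   right multiplication by w0 permutes W, and lengths add: l(x x0^-1) = l(x0) - l(x) since
   x <=_L x0, and l(x0 y w0) = l(w0) - l(x0) - l(y). Finally x <=_L x0 gives
   x x0^-1 <=_L x0^-1, and x0 <=_R x0 y gives x0 y w0 <=_R x0 w0. *)

lemma root_refl_self: "\<alpha> \<noteq> 0 \<Longrightarrow> root_refl \<alpha> \<alpha> = - \<alpha>"
  by (simp add: root_refl_def algebra_simps) (metis scaleR_2)

lemma root_refl_root_refl [simp]: "\<alpha> \<noteq> 0 \<Longrightarrow> root_refl \<alpha> (root_refl \<alpha> v) = v"
  by (simp add: root_refl_def inner_diff_left algebra_simps)

lemma root_refl_uminus: "root_refl (- \<alpha>) = root_refl \<alpha>"
  by (simp add: fun_eq_iff root_refl_def)

lemma orthogonal_transformation_root_refl: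
  "\<alpha> \<noteq> 0 \<Longrightarrow> orthogonal_transformation (root_refl \<alpha>)"
  unfolding orthogonal_transformation_def
  by (auto intro!: linearI simp: root_refl_def inner_diff_left inner_diff_right inner_add_left
      algebra_simps add_divide_distrib inner_commute)

lemma root_refl_conjugate:
  assumes "orthogonal_transformation u"
  shows "root_refl (u \<alpha>) \<circ> u = u \<circ> root_refl \<alpha>"
proof
  fix x
  have "u x \<bullet> u \<alpha> = x \<bullet> \<alpha>" "u \<alpha> \<bullet> u \<alpha> = \<alpha> \<bullet> \<alpha>"
    using assms by (simp_all add: orthogonal_transformation_def)
  then show "(root_refl (u \<alpha>) \<circ> u) x = (u \<circ> root_refl \<alpha>) x"
    using assms by (simp add: root_refl_def linear_diff orthogonal_transformation_linear
        orthogonal_transformation_scaleR)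
qed

definition refl_word :: "'a::euclidean_space list \<Rightarrow> 'a \<Rightarrow> 'a" where
  "refl_word ss = foldr (\<lambda>\<alpha> f. root_refl \<alpha> \<circ> f) ss id"

lemma refl_word_Nil [simp]: "refl_word [] = id"
  by (simp add: refl_word_def)

lemma refl_word_Cons [simp]: "refl_word (\<alpha> # ss) = root_refl \<alpha> \<circ> refl_word ss"
  by (simp add: refl_word_def)

lemma refl_word_append: "refl_word (ss @ ts) = refl_word ss \<circ> refl_word ts"
  by (induction ss) (simp_all add: o_assoc)

lemma refl_word_in_weyl_group: "set ss \<subseteq> R \<Longrightarrow> refl_word ss \<in> weyl_group R"
  by (induction ss) (auto intro: weyl_group.intros)

lemma refl_word_snoc: "refl_word (ss @ [\<alpha>]) = refl_word ss \<circ> root_refl \<alpha>"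
  by (simp add: refl_word_append)

lemma root_refl_in_weyl_group: "\<alpha> \<in> R \<Longrightarrow> root_refl \<alpha> \<in> weyl_group R"
  using weyl_group.weyl_step[OF _ weyl_group.weyl_id] by simp

inductive_set nat_combinations :: "'a::real_vector set \<Rightarrow> 'a set" for S where
  zero: "0 \<in> nat_combinations S"
| add: "\<gamma> \<in> S \<Longrightarrow> v \<in> nat_combinations S \<Longrightarrow> \<gamma> + v \<in> nat_combinations S"

lemma nat_combinations_add:
  "u \<in> nat_combinations S \<Longrightarrow> v \<in> nat_combinations S \<Longrightarrow> u + v \<in> nat_combinations S"
  by (induction u rule: nat_combinations.induct)
    (auto simp: add.assoc intro: nat_combinations.intros)

lemma nat_combinations_split:
  "v \<in> nat_combinations S \<Longrightarrow> \<exists>n::nat. \<exists>v'. v = real n *\<^sub>R \<alpha> + v' \<and> v' \<in> nat_combinations (S - {\<alpha>})"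
proof (induction v rule: nat_combinations.induct)
  case zero
  show ?case by (intro exI[of _ 0] exI[of _ 0]) (auto intro: nat_combinations.zero)
next
  case (add \<gamma> v)
  then obtain n v' where v: "v = real n *\<^sub>R \<alpha> + v'" "v' \<in> nat_combinations (S - {\<alpha>})"
    by blast
  show ?case
  proof (cases "\<gamma> = \<alpha>")
    case True
    with v show ?thesis by (intro exI[of _ "Suc n"] exI[of _ v']) (auto simp: algebra_simps)
  next
    case False
    with v add.hyps show ?thesis
      by (intro exI[of _ n] exI[of _ "\<gamma> + v'"])
        (auto simp: algebra_simps intro: nat_combinations.add)
  qed
qed

lemma nat_combinations_inner_pos:
  assumes "v \<in> nat_combinations S" "linear f" "\<And>\<gamma>. \<gamma> \<in> S \<Longrightarrow> a \<bullet> f \<gamma> > 0"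
  shows "v = 0 \<or> a \<bullet> f v > 0"
  using assms
  by (induction v rule: nat_combinations.induct)
    (auto simp: linear_add linear_0 inner_add_right intro: add_pos_pos)

lemma nat_combinations_inner_nonpos:
  assumes "v \<in> nat_combinations S" "\<And>\<gamma>. \<gamma> \<in> S \<Longrightarrow> a \<bullet> \<gamma> \<le> 0"
  shows "a \<bullet> v \<le> 0"
  using assms
  by (induction v rule: nat_combinations.induct) (auto simp: inner_add_right add_nonpos_nonpos)

section \<open>Root systems with a chosen positive system\<close>

locale root_system =
  fixes R :: "'a::euclidean_space set" and c :: 'a
  assumes crystallographic: "crystallographic_root_system R"
    and generic: "generic_vector R c"
begin

abbreviation "W \<equiv> weyl_group R"
abbreviation "Pos \<equiv> positive_roots R c"
abbreviation "Sim \<equiv> simple_roots R c"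
abbreviation "len \<equiv> coxeter_length R c"
abbreviation "w0 \<equiv> longest_element R c"

lemma finite_roots: "finite R"
  using crystallographic by (simp add: crystallographic_root_system_def)

lemma root_nonzero: "\<alpha> \<in> R \<Longrightarrow> \<alpha> \<noteq> 0"
  using crystallographic by (auto simp: crystallographic_root_system_def)

lemma root_refl_root: "\<alpha> \<in> R \<Longrightarrow> \<beta> \<in> R \<Longrightarrow> root_refl \<alpha> \<beta> \<in> R"
  using crystallographic by (auto simp: crystallographic_root_system_def)

lemma cartan_integer: "\<alpha> \<in> R \<Longrightarrow> \<beta> \<in> R \<Longrightarrow> 2 * (\<beta> \<bullet> \<alpha>) / (\<alpha> \<bullet> \<alpha>) \<in> \<int>"
  using crystallographic by (auto simp: crystallographic_root_system_def)

lemma root_multiple: "\<alpha> \<in> R \<Longrightarrow> t *\<^sub>R \<alpha> \<in> R \<Longrightarrow> t = 1 \<or> t = -1"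
  using crystallographic by (auto simp: crystallographic_root_system_def)

lemma uminus_root: "\<alpha> \<in> R \<Longrightarrow> - \<alpha> \<in> R"
  using root_refl_root[of \<alpha> \<alpha>] root_refl_self[OF root_nonzero] by simp

lemma root_refl_image_roots: "\<alpha> \<in> R \<Longrightarrow> root_refl \<alpha> ` R = R"
proof
  assume "\<alpha> \<in> R"
  then show "root_refl \<alpha> ` R \<subseteq> R" using root_refl_root by blast
  show "R \<subseteq> root_refl \<alpha> ` R"
    using \<open>\<alpha> \<in> R\<close> root_refl_root root_refl_root_refl[OF root_nonzero] by (metis image_eqI subsetI)
qed

lemma inner_generic_root: "\<beta> \<in> R \<Longrightarrow> c \<bullet> \<beta> \<noteq> 0"
  using generic by (auto simp: generic_vector_def)

lemma positive_roots_iff: "\<beta> \<in> Pos \<longleftrightarrow> \<beta> \<in> R \<and> c \<bullet> \<beta> > 0"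
  by (simp add: positive_roots_def)

lemma simple_root_positive: "\<alpha> \<in> Sim \<Longrightarrow> \<alpha> \<in> Pos"
  by (simp add: simple_roots_def)

lemma simple_root_root: "\<alpha> \<in> Sim \<Longrightarrow> \<alpha> \<in> R"
  by (simp add: simple_roots_def positive_roots_iff)

lemma finite_positive_roots: "finite Pos"
  using finite_roots by (simp add: positive_roots_def)

lemma root_positive_or_negative: "\<beta> \<in> R \<Longrightarrow> \<beta> \<in> Pos \<or> - \<beta> \<in> Pos"
  using inner_generic_root uminus_root by (force simp: positive_roots_iff)

lemma positive_root_induct [consumes 1, case_names step]:
  assumes "\<beta> \<in> Pos"
    and step: "\<And>\<beta>. \<beta> \<in> Pos \<Longrightarrow> (\<And>\<gamma>. \<gamma> \<in> Pos \<Longrightarrow> c \<bullet> \<gamma> < c \<bullet> \<beta> \<Longrightarrow> P \<gamma>) \<Longrightarrow> P \<beta>"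
  shows "P \<beta>"
  using assms(1)
proof (induction \<beta> rule: measure_induct_rule[where f = "\<lambda>\<beta>. card {\<gamma>\<in>R. c \<bullet> \<gamma> < c \<bullet> \<beta>}"])
  case (less \<beta>)
  show ?case
  proof (rule step[OF less.prems])
    fix \<gamma>
    assume \<gamma>: "\<gamma> \<in> Pos" "c \<bullet> \<gamma> < c \<bullet> \<beta>"
    then have "{\<delta>\<in>R. c \<bullet> \<delta> < c \<bullet> \<gamma>} \<subset> {\<delta>\<in>R. c \<bullet> \<delta> < c \<bullet> \<beta>}"
      by (auto simp: positive_roots_iff)
    then have "card {\<delta>\<in>R. c \<bullet> \<delta> < c \<bullet> \<gamma>} < card {\<delta>\<in>R. c \<bullet> \<delta> < c \<bullet> \<beta>}"
      by (intro psubset_card_mono) (simp add: finite_roots)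
    then show "P \<gamma>" using less.IH \<gamma>(1) by blast
  qed
qed

lemma positive_root_nat_combination: "\<beta> \<in> Pos \<Longrightarrow> \<beta> \<in> nat_combinations Sim"
proof (induction \<beta> rule: positive_root_induct)
  case (step \<beta>)
  show ?case
  proof (cases "\<beta> \<in> Sim")
    case True
    then show ?thesis using nat_combinations.add[OF True nat_combinations.zero] by simp
  next
    case False
    then obtain \<beta>1 \<beta>2 where \<beta>: "\<beta>1 \<in> Pos" "\<beta>2 \<in> Pos" "\<beta> = \<beta>1 + \<beta>2"
      using step(1) by (auto simp: simple_roots_def)
    then have "c \<bullet> \<beta>1 < c \<bullet> \<beta>" "c \<bullet> \<beta>2 < c \<bullet> \<beta>"
      by (auto simp: positive_roots_iff inner_add_right)
    then show ?thesis using step(2) \<beta> nat_combinations_add by metis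
  qed
qed

lemma inner_sq_less_roots:
  assumes "\<alpha> \<in> R" "\<beta> \<in> R" "\<alpha> \<noteq> \<beta>" "\<alpha> \<bullet> \<beta> > 0"
  shows "(\<alpha> \<bullet> \<beta>)\<^sup>2 < (\<alpha> \<bullet> \<alpha>) * (\<beta> \<bullet> \<beta>)"
proof -
  have "\<alpha> \<bullet> \<beta> \<noteq> norm \<alpha> * norm \<beta>"
  proof
    assume "\<alpha> \<bullet> \<beta> = norm \<alpha> * norm \<beta>"
    then have "norm \<alpha> *\<^sub>R \<beta> = norm \<beta> *\<^sub>R \<alpha>" by (simp add: norm_cauchy_schwarz_eq)
    then have \<beta>: "\<beta> = (norm \<beta> / norm \<alpha>) *\<^sub>R \<alpha>"
      using root_nonzero[OF assms(1)] by (simp add: eq_vector_fraction_iff)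
    moreover have "norm \<beta> / norm \<alpha> > 0"
      using root_nonzero assms(1,2) by simp
    ultimately have "norm \<beta> / norm \<alpha> = 1"
      using root_multiple[OF assms(1), of "norm \<beta> / norm \<alpha>"] assms(2) by auto
    with \<beta> assms(3) show False by simp
  qed
  then have "\<alpha> \<bullet> \<beta> < norm \<alpha> * norm \<beta>"
    using norm_cauchy_schwarz[of \<alpha> \<beta>] by simp
  then have "(\<alpha> \<bullet> \<beta>)\<^sup>2 < (norm \<alpha> * norm \<beta>)\<^sup>2"
    using assms(4) by (simp add: power_strict_mono)
  then show ?thesis by (simp add: power_mult_distrib dot_square_norm)
qed

lemma root_diff_root:
  assumes "\<alpha> \<in> R" "\<beta> \<in> R" "\<alpha> \<noteq> \<beta>" "\<alpha> \<bullet> \<beta> > 0"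
  shows "\<alpha> - \<beta> \<in> R"
proof -
  have \<alpha>\<alpha>: "\<alpha> \<bullet> \<alpha> > 0" and \<beta>\<beta>: "\<beta> \<bullet> \<beta> > 0"
    using assms(1,2) root_nonzero by auto
  obtain m where m: "2 * (\<alpha> \<bullet> \<beta>) / (\<beta> \<bullet> \<beta>) = of_int m"
    using cartan_integer[OF assms(2,1)] by (auto elim: Ints_cases)
  obtain n where n: "2 * (\<alpha> \<bullet> \<beta>) / (\<alpha> \<bullet> \<alpha>) = of_int n"
    using cartan_integer[OF assms(1,2)] by (auto simp: inner_commute elim: Ints_cases)
  have "m > 0" "n > 0"
    using m n assms(4) \<alpha>\<alpha> \<beta>\<beta>
    by (metis divide_pos_pos mult_pos_pos of_int_0_less_iff zero_less_numeral)+
  have "of_int (m * n) = (2 * (\<alpha> \<bullet> \<beta>) / (\<beta> \<bullet> \<beta>)) * (2 * (\<alpha> \<bullet> \<beta>) / (\<alpha> \<bullet> \<alpha>))"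
    using m n by simp
  also have "\<dots> = 4 * (\<alpha> \<bullet> \<beta>)\<^sup>2 / ((\<alpha> \<bullet> \<alpha>) * (\<beta> \<bullet> \<beta>))"
    by (simp add: power2_eq_square)
  also have "\<dots> < 4"
    using inner_sq_less_roots[OF assms] \<alpha>\<alpha> \<beta>\<beta> by (simp add: mult_imp_div_pos_less)
  finally have "m * n < 4" by linarith
  have "\<not> (m \<ge> 2 \<and> n \<ge> 2)"
  proof
    assume "m \<ge> 2 \<and> n \<ge> 2"
    then have "2 * 2 \<le> m * n" by (intro mult_mono) auto
    with \<open>m * n < 4\<close> show False by simp
  qed
  with \<open>m > 0\<close> \<open>n > 0\<close> have "m = 1 \<or> n = 1" by linarith
  then show ?thesis
  proof
    assume "m = 1"
    then have "root_refl \<beta> \<alpha> = \<alpha> - \<beta>" using m assms(4) by (simp add: root_refl_def)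
    then show ?thesis using root_refl_root[OF assms(2,1)] by simp
  next
    assume "n = 1"
    then have "root_refl \<alpha> \<beta> = - (\<alpha> - \<beta>)" using n assms(4)
      by (simp add: root_refl_def inner_commute)
    then show ?thesis using uminus_root[OF root_refl_root[OF assms(1,2)]] by simp
  qed
qed

lemma simple_roots_inner_nonpos:
  assumes "\<alpha> \<in> Sim" "\<beta> \<in> Sim" "\<alpha> \<noteq> \<beta>"
  shows "\<alpha> \<bullet> \<beta> \<le> 0"
proof (rule ccontr)
  have not_sum: "\<delta> \<noteq> \<beta>' + \<gamma>" if "\<delta> \<in> Sim" "\<beta>' \<in> Pos" "\<gamma> \<in> Pos" for \<delta> \<beta>' \<gamma>
    using that unfolding simple_roots_def by blast
  assume "\<not> \<alpha> \<bullet> \<beta> \<le> 0"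
  then have "\<alpha> - \<beta> \<in> R" using root_diff_root assms simple_root_root by simp
  then consider "\<alpha> - \<beta> \<in> Pos" | "\<beta> - \<alpha> \<in> Pos"
    using root_positive_or_negative[of "\<alpha> - \<beta>"] by auto
  then show False
  proof cases
    case 1
    then show False using not_sum[OF assms(1) simple_root_positive[OF assms(2)]] by force
  next
    case 2
    then show False using not_sum[OF assms(2) simple_root_positive[OF assms(1)]] by force
  qed
qed

lemma simple_refl_negative_imp_eq:
  assumes \<alpha>: "\<alpha> \<in> Sim" and \<beta>: "\<beta> \<in> Pos" and neg: "c \<bullet> root_refl \<alpha> \<beta> < 0"
  shows "\<beta> = \<alpha>"
proof (rule ccontr)
  \<comment> \<open>Writing \<open>\<beta>\<close> and \<open>- root_refl \<alpha> \<beta>\<close> as \<open>n \<alpha> + v\<close> and \<open>n' \<alpha> + u\<close> with \<open>v\<close>, \<open>u\<close> combinations of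
      the other simple roots makes \<open>v + u\<close> a positive multiple of \<open>\<alpha>\<close>, yet \<open>\<alpha> \<bullet> (v + u) \<le> 0\<close>.\<close>
  assume "\<beta> \<noteq> \<alpha>"
  have \<alpha>R: "\<alpha> \<in> R" and c\<alpha>: "c \<bullet> \<alpha> > 0" and \<beta>R: "\<beta> \<in> R"
    using \<alpha> \<beta> simple_root_root simple_root_positive positive_roots_iff by auto
  have others_pos: "c \<bullet> \<gamma> > 0" if "\<gamma> \<in> Sim - {\<alpha>}" for \<gamma>
    using that simple_root_positive positive_roots_iff by auto
  obtain n v where nv: "\<beta> = real n *\<^sub>R \<alpha> + v" "v \<in> nat_combinations (Sim - {\<alpha>})"
    using nat_combinations_split[OF positive_root_nat_combination[OF \<beta>]] by blast
  have "v \<noteq> 0"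
  proof
    assume "v = 0"
    then have "real n = 1" using nv \<beta>R root_multiple[OF \<alpha>R, of "real n"] by auto
    with nv \<open>v = 0\<close> \<open>\<beta> \<noteq> \<alpha>\<close> show False by simp
  qed
  then have cv: "c \<bullet> v > 0"
    using nat_combinations_inner_pos[OF nv(2) linear_ident others_pos] by simp
  have "- root_refl \<alpha> \<beta> \<in> Pos"
    using neg uminus_root[OF root_refl_root[OF \<alpha>R \<beta>R]] by (simp add: positive_roots_iff)
  then obtain n' u where
    nu: "- root_refl \<alpha> \<beta> = real n' *\<^sub>R \<alpha> + u" "u \<in> nat_combinations (Sim - {\<alpha>})"
    using nat_combinations_split[OF positive_root_nat_combination] by blast
  have cu: "c \<bullet> u \<ge> 0"
    using nat_combinations_inner_pos[OF nu(2) linear_ident others_pos] by auto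
  define k where "k = 2 * (\<beta> \<bullet> \<alpha>) / (\<alpha> \<bullet> \<alpha>)"
  have "root_refl \<alpha> \<beta> = \<beta> - k *\<^sub>R \<alpha>"
    by (simp add: root_refl_def k_def)
  with nu(1) have u: "u = k *\<^sub>R \<alpha> - \<beta> - real n' *\<^sub>R \<alpha>"
    by (simp add: algebra_simps)
  have v: "v = \<beta> - real n *\<^sub>R \<alpha>"
    using nv(1) by simp
  have vu: "v + u = (k - real n - real n') *\<^sub>R \<alpha>"
    unfolding u v by (simp add: algebra_simps)
  then have "(k - real n - real n') * (c \<bullet> \<alpha>) > 0"
    using cv cu by (metis add_pos_nonneg inner_add_right inner_scaleR_right)
  then have "k - real n - real n' > 0"
    using c\<alpha> by (simp add: zero_less_mult_iff)
  then have "\<alpha> \<bullet> (v + u) > 0"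
    using vu root_nonzero[OF \<alpha>R] by simp
  moreover have "\<alpha> \<bullet> (v + u) \<le> 0"
    using nat_combinations_inner_nonpos[OF nat_combinations_add[OF nv(2) nu(2)]]
      simple_roots_inner_nonpos[OF \<alpha>] by blast
  ultimately show False by simp
qed

lemma simple_refl_positive:
  assumes "\<alpha> \<in> Sim" "\<beta> \<in> Pos" "\<beta> \<noteq> \<alpha>"
  shows "root_refl \<alpha> \<beta> \<in> Pos - {\<alpha>}"
proof -
  have \<alpha>R: "\<alpha> \<in> R" and \<beta>R: "\<beta> \<in> R" and c\<alpha>: "c \<bullet> \<alpha> > 0"
    using assms simple_root_root simple_root_positive positive_roots_iff by auto
  have "\<not> c \<bullet> root_refl \<alpha> \<beta> < 0"
    using simple_refl_negative_imp_eq[OF assms(1,2)] assms(3) by blast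
  then have "root_refl \<alpha> \<beta> \<in> Pos"
    using root_refl_root[OF \<alpha>R \<beta>R] inner_generic_root[OF root_refl_root[OF \<alpha>R \<beta>R]]
    by (simp add: positive_roots_iff)
  moreover have "root_refl \<alpha> \<beta> \<noteq> \<alpha>"
  proof
    assume "root_refl \<alpha> \<beta> = \<alpha>"
    then have "\<beta> = - \<alpha>"
      by (metis root_nonzero[OF \<alpha>R] root_refl_root_refl root_refl_self)
    then show False using assms(2) c\<alpha> by (simp add: positive_roots_iff)
  qed
  ultimately show ?thesis by simp
qed

section \<open>Length equals the number of inversions\<close>

lemma weyl_group_orthogonal_permutes_roots:
  "w \<in> W \<Longrightarrow> orthogonal_transformation w \<and> w ` R = R"
proof (induction w rule: weyl_group.induct)
  case weyl_id
  show ?case by (simp add: id_def)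
next
  case (weyl_step \<alpha> w)
  then have "orthogonal_transformation (root_refl \<alpha> \<circ> w)"
    using orthogonal_transformation_compose orthogonal_transformation_root_refl root_nonzero
    by blast
  moreover have "(root_refl \<alpha> \<circ> w) ` R = R"
    using weyl_step root_refl_image_roots by (metis image_comp)
  ultimately show ?case ..
qed

lemma orthogonal_transformation_weyl: "w \<in> W \<Longrightarrow> orthogonal_transformation w"
  using weyl_group_orthogonal_permutes_roots by blast

lemma weyl_maps_roots: "w \<in> W \<Longrightarrow> \<beta> \<in> R \<Longrightarrow> w \<beta> \<in> R"
  using weyl_group_orthogonal_permutes_roots by blast

lemma bij_weyl: "w \<in> W \<Longrightarrow> bij w"
  by (simp add: orthogonal_transformation_bij orthogonal_transformation_weyl)

lemma weyl_inv_f_f [simp]: "w \<in> W \<Longrightarrow> inv w (w v) = v"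
  by (simp add: bij_is_inj bij_weyl)

lemma weyl_f_inv_f [simp]: "w \<in> W \<Longrightarrow> w (inv w v) = v"
  by (meson bij_weyl bij_inv_eq_iff)

lemma coxeter_length_eq_Least:
  "len w = (LEAST n. \<exists>ss. length ss = n \<and> set ss \<subseteq> Sim \<and> w = refl_word ss)"
  unfolding coxeter_length_def refl_word_def ..

lemma len_refl_word_le: "set ss \<subseteq> Sim \<Longrightarrow> len (refl_word ss) \<le> length ss"
  unfolding coxeter_length_eq_Least by (rule Least_le) blast

lemma reduced_word_exists:
  assumes "set ss \<subseteq> Sim"
  obtains ts where "set ts \<subseteq> Sim" "length ts = len (refl_word ss)" "refl_word ts = refl_word ss"
proof -
  have "\<exists>n ts. length ts = n \<and> set ts \<subseteq> Sim \<and> refl_word ss = refl_word ts"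
    using assms by blast
  from LeastI_ex[OF this] show thesis
    using that unfolding coxeter_length_eq_Least by metis
qed

lemma simple_refl_word_in_weyl_group: "set ss \<subseteq> Sim \<Longrightarrow> refl_word ss \<in> W"
  using refl_word_in_weyl_group simple_root_root by blast

lemma refl_word_deletion:
  assumes "set ss \<subseteq> Sim" "\<alpha> \<in> Sim" "c \<bullet> refl_word ss \<alpha> < 0"
  shows "\<exists>ts. set ts \<subseteq> Sim \<and> length ss = Suc (length ts) \<and>
    refl_word ts = refl_word ss \<circ> root_refl \<alpha>"
  using assms
proof (induction ss)
  case Nil
  then show ?case using simple_root_positive positive_roots_iff by fastforce
next
  case (Cons \<beta> ss)
  have \<alpha>R: "\<alpha> \<in> R" using Cons.prems(2) simple_root_root by blast
  have ssW: "refl_word ss \<in> W" using Cons.prems(1) simple_refl_word_in_weyl_group by simp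
  show ?case
  proof (cases "c \<bullet> refl_word ss \<alpha> < 0")
    case True
    have "set ss \<subseteq> Sim" using Cons.prems(1) by simp
    from Cons.IH[OF this Cons.prems(2) True] obtain ts where
      "set ts \<subseteq> Sim" "length ss = Suc (length ts)" "refl_word ts = refl_word ss \<circ> root_refl \<alpha>"
      by blast
    with Cons.prems show ?thesis by (intro exI[of _ "\<beta> # ts"]) (auto simp: o_assoc)
  next
    case False
    then have "refl_word ss \<alpha> \<in> Pos"
      using weyl_maps_roots[OF ssW \<alpha>R] inner_generic_root[OF weyl_maps_roots[OF ssW \<alpha>R]]
      by (auto simp: positive_roots_iff)
    moreover have "c \<bullet> root_refl \<beta> (refl_word ss \<alpha>) < 0"
      using Cons.prems(3) by simp
    ultimately have "refl_word ss \<alpha> = \<beta>"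
      using simple_refl_negative_imp_eq Cons.prems(1) by auto
    then have "root_refl \<beta> (refl_word ss v) = refl_word ss (root_refl \<alpha> v)" for v
      using root_refl_conjugate[OF orthogonal_transformation_weyl[OF ssW], of \<alpha>]
      by (metis comp_apply)
    then have "refl_word ss = refl_word (\<beta> # ss) \<circ> root_refl \<alpha>"
      by (simp add: fun_eq_iff root_nonzero[OF \<alpha>R])
    moreover have "set ss \<subseteq> Sim" using Cons.prems(1) by simp
    ultimately show ?thesis by (metis length_Cons)
  qed
qed

lemma len_comp_simple_neg:
  assumes ss: "set ss \<subseteq> Sim" and \<alpha>: "\<alpha> \<in> Sim" and neg: "c \<bullet> refl_word ss \<alpha> < 0"
  shows "len (refl_word ss \<circ> root_refl \<alpha>) + 1 = len (refl_word ss)"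
proof -
  have \<alpha>0: "\<alpha> \<noteq> 0" using \<alpha> simple_root_root root_nonzero by blast
  obtain rs where rs: "set rs \<subseteq> Sim" "length rs = len (refl_word ss)" "refl_word rs = refl_word ss"
    using reduced_word_exists[OF ss] .
  then obtain ts where ts: "set ts \<subseteq> Sim" "length rs = Suc (length ts)"
      "refl_word ts = refl_word ss \<circ> root_refl \<alpha>"
    using refl_word_deletion[OF rs(1) \<alpha>] neg by auto
  have "len (refl_word ss \<circ> root_refl \<alpha>) + 1 \<le> len (refl_word ss)"
    using len_refl_word_le[OF ts(1)] ts rs by simp
  moreover obtain us where us: "set us \<subseteq> Sim" "length us = len (refl_word ss \<circ> root_refl \<alpha>)"
      "refl_word us = refl_word ss \<circ> root_refl \<alpha>"
    using reduced_word_exists[OF ts(1)] ts(3) by metis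
  have "refl_word (us @ [\<alpha>]) = refl_word ss"
    by (simp add: refl_word_append us(3) fun_eq_iff \<alpha>0)
  then have "len (refl_word ss) \<le> len (refl_word ss \<circ> root_refl \<alpha>) + 1"
    using len_refl_word_le[of "us @ [\<alpha>]"] us \<alpha> by simp
  ultimately show ?thesis by simp
qed

lemma len_comp_simple_pos:
  assumes ss: "set ss \<subseteq> Sim" and \<alpha>: "\<alpha> \<in> Sim" and pos: "c \<bullet> refl_word ss \<alpha> > 0"
  shows "len (refl_word ss \<circ> root_refl \<alpha>) = len (refl_word ss) + 1"
proof -
  have \<alpha>0: "\<alpha> \<noteq> 0" using \<alpha> simple_root_root root_nonzero by blast
  have "refl_word (ss @ [\<alpha>]) \<alpha> = - refl_word ss \<alpha>"
    using root_refl_self[OF \<alpha>0]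
      orthogonal_transformation_weyl[OF simple_refl_word_in_weyl_group[OF ss]]
    by (simp add: refl_word_snoc linear_neg orthogonal_transformation_linear)
  then have "len (refl_word (ss @ [\<alpha>]) \<circ> root_refl \<alpha>) + 1 = len (refl_word (ss @ [\<alpha>]))"
    using len_comp_simple_neg[of "ss @ [\<alpha>]" \<alpha>] ss \<alpha> pos by simp
  moreover have "refl_word (ss @ [\<alpha>]) \<circ> root_refl \<alpha> = refl_word ss"
    by (simp add: refl_word_snoc fun_eq_iff \<alpha>0)
  ultimately show ?thesis by (simp add: refl_word_snoc)
qed

definition inversions :: "('a \<Rightarrow> 'a) \<Rightarrow> 'a set" where
  "inversions w = {\<beta> \<in> Pos. c \<bullet> w \<beta> < 0}"

lemma inversions_subset: "inversions w \<subseteq> Pos"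
  by (auto simp: inversions_def)

lemma finite_inversions: "finite (inversions w)"
  using finite_subset[OF inversions_subset finite_positive_roots] .

lemma card_inversions_le: "card (inversions w) \<le> card Pos"
  using card_mono[OF finite_positive_roots inversions_subset] .

lemma inversions_comp_simple:
  assumes "\<alpha> \<in> Sim"
  shows "inversions (w \<circ> root_refl \<alpha>) - {\<alpha>} = root_refl \<alpha> ` (inversions w - {\<alpha>})"
proof (intro equalityI subsetI)
  have \<alpha>0: "\<alpha> \<noteq> 0" using assms simple_root_root root_nonzero by blast
  fix \<beta>
  assume \<beta>: "\<beta> \<in> inversions (w \<circ> root_refl \<alpha>) - {\<alpha>}"
  then have "root_refl \<alpha> \<beta> \<in> Pos - {\<alpha>}"
    using simple_refl_positive[OF assms] by (simp add: inversions_def)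
  then have "root_refl \<alpha> \<beta> \<in> inversions w - {\<alpha>}"
    using \<beta> by (simp add: inversions_def)
  moreover have "\<beta> = root_refl \<alpha> (root_refl \<alpha> \<beta>)" using \<alpha>0 by simp
  ultimately show "\<beta> \<in> root_refl \<alpha> ` (inversions w - {\<alpha>})" by blast
next
  have \<alpha>0: "\<alpha> \<noteq> 0" using assms simple_root_root root_nonzero by blast
  fix \<beta>'
  assume "\<beta>' \<in> root_refl \<alpha> ` (inversions w - {\<alpha>})"
  then obtain \<beta> where \<beta>: "\<beta> \<in> inversions w - {\<alpha>}" and "\<beta>' = root_refl \<alpha> \<beta>" by blast
  moreover have "root_refl \<alpha> \<beta> \<in> Pos - {\<alpha>}"
    using \<beta> simple_refl_positive[OF assms] by (simp add: inversions_def)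
  ultimately show "\<beta>' \<in> inversions (w \<circ> root_refl \<alpha>) - {\<alpha>}"
    using \<alpha>0 by (simp add: inversions_def)
qed

lemma card_inversions_comp_simple:
  assumes w: "w \<in> W" and \<alpha>: "\<alpha> \<in> Sim"
  shows "c \<bullet> w \<alpha> < 0 \<Longrightarrow> card (inversions (w \<circ> root_refl \<alpha>)) + 1 = card (inversions w)"
    and "c \<bullet> w \<alpha> > 0 \<Longrightarrow> card (inversions (w \<circ> root_refl \<alpha>)) = card (inversions w) + 1"
proof -
  have \<alpha>0: "\<alpha> \<noteq> 0" using \<alpha> simple_root_root root_nonzero by blast
  have "inj (root_refl \<alpha>)"
    using orthogonal_transformation_inj[OF orthogonal_transformation_root_refl[OF \<alpha>0]] .
  then have same: "card (inversions (w \<circ> root_refl \<alpha>) - {\<alpha>}) = card (inversions w - {\<alpha>})"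
    by (simp add: inversions_comp_simple[OF \<alpha>] card_image inj_on_subset)
  have "w (root_refl \<alpha> \<alpha>) = - w \<alpha>"
    using w \<alpha>0 by (simp add: root_refl_self linear_neg orthogonal_transformation_linear
        orthogonal_transformation_weyl)
  then have mem: "\<alpha> \<in> inversions w \<longleftrightarrow> c \<bullet> w \<alpha> < 0"
    "\<alpha> \<in> inversions (w \<circ> root_refl \<alpha>) \<longleftrightarrow> c \<bullet> w \<alpha> > 0"
    using simple_root_positive[OF \<alpha>] by (auto simp: inversions_def)
  show "c \<bullet> w \<alpha> < 0 \<Longrightarrow> card (inversions (w \<circ> root_refl \<alpha>)) + 1 = card (inversions w)"
    using same mem card_Suc_Diff1[OF finite_inversions, of \<alpha> w] by simp
  show "c \<bullet> w \<alpha> > 0 \<Longrightarrow> card (inversions (w \<circ> root_refl \<alpha>)) = card (inversions w) + 1"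
    using same mem card_Suc_Diff1[OF finite_inversions, of \<alpha> "w \<circ> root_refl \<alpha>"] by simp
qed

lemma len_refl_word_eq_card_inversions:
  "set ss \<subseteq> Sim \<Longrightarrow> len (refl_word ss) = card (inversions (refl_word ss))"
proof (induction ss rule: rev_induct)
  case Nil
  have "inversions id = {}" by (auto simp: inversions_def positive_roots_iff)
  then show ?case using len_refl_word_le[of "[]"] by (simp add: id_def)
next
  case (snoc \<alpha> ss)
  then have ss: "set ss \<subseteq> Sim" and \<alpha>: "\<alpha> \<in> Sim" by auto
  have "refl_word ss \<alpha> \<in> R"
    using weyl_maps_roots[OF simple_refl_word_in_weyl_group[OF ss] simple_root_root[OF \<alpha>]] .
  then consider "c \<bullet> refl_word ss \<alpha> < 0" | "c \<bullet> refl_word ss \<alpha> > 0"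
    using inner_generic_root by (meson linorder_neqE_linordered_idom)
  then show ?case
  proof cases
    case 1
    then show ?thesis
      using len_comp_simple_neg[OF ss \<alpha>] snoc.IH[OF ss]
        card_inversions_comp_simple(1)[OF simple_refl_word_in_weyl_group[OF ss] \<alpha>]
      unfolding refl_word_snoc by linarith
  next
    case 2
    then show ?thesis
      using len_comp_simple_pos[OF ss \<alpha>] snoc.IH[OF ss]
        card_inversions_comp_simple(2)[OF simple_refl_word_in_weyl_group[OF ss] \<alpha>]
      unfolding refl_word_snoc by linarith
  qed
qed

lemma root_refl_positive_word:
  "\<beta> \<in> Pos \<Longrightarrow> \<exists>ss. set ss \<subseteq> Sim \<and> root_refl \<beta> = refl_word ss"
proof (induction \<beta> rule: positive_root_induct)
  case (step \<beta>)
  show ?case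
  proof (cases "\<beta> \<in> Sim")
    case True
    then show ?thesis by (intro exI[of _ "[\<beta>]"]) simp
  next
    case False
    have \<beta>R: "\<beta> \<in> R" using step(1) by (simp add: positive_roots_iff)
    have "\<exists>\<alpha>\<in>Sim. \<beta> \<bullet> \<alpha> > 0"
    proof (rule ccontr)
      assume "\<not> (\<exists>\<alpha>\<in>Sim. \<beta> \<bullet> \<alpha> > 0)"
      then have "\<beta> \<bullet> \<beta> \<le> 0"
        using nat_combinations_inner_nonpos[OF positive_root_nat_combination[OF step(1)]] by force
      then show False using root_nonzero[OF \<beta>R] by (meson inner_gt_zero_iff leD)
    qed
    then obtain \<alpha> where \<alpha>: "\<alpha> \<in> Sim" "\<beta> \<bullet> \<alpha> > 0" by blast
    have \<alpha>R: "\<alpha> \<in> R" and c\<alpha>: "c \<bullet> \<alpha> > 0"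
      using \<alpha>(1) simple_root_root simple_root_positive positive_roots_iff by auto
    \<comment> \<open>\<open>root_refl \<beta> = root_refl \<alpha> \<circ> root_refl \<gamma> \<circ> root_refl \<alpha>\<close>, and \<open>\<gamma>\<close> is a lower positive root.\<close>
    define \<gamma> where "\<gamma> = root_refl \<alpha> \<beta>"
    have "\<gamma> \<in> Pos"
      using simple_refl_positive[OF \<alpha>(1) step(1)] False \<alpha>(1) by (auto simp: \<gamma>_def)
    moreover have "2 * (\<beta> \<bullet> \<alpha>) / (\<alpha> \<bullet> \<alpha>) * (c \<bullet> \<alpha>) > 0"
      using \<alpha>(2) c\<alpha> root_nonzero[OF \<alpha>R] by simp
    then have "c \<bullet> \<gamma> < c \<bullet> \<beta>"
      by (simp add: \<gamma>_def root_refl_def inner_diff_right)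
    ultimately obtain ts where ts: "set ts \<subseteq> Sim" "root_refl \<gamma> = refl_word ts"
      using step(2) by blast
    have "root_refl \<gamma> (root_refl \<alpha> v) = root_refl \<alpha> (root_refl \<beta> v)" for v
      using root_refl_conjugate[OF orthogonal_transformation_root_refl[OF root_nonzero[OF \<alpha>R]]]
      unfolding \<gamma>_def by (metis comp_apply)
    then have "root_refl \<beta> = refl_word (\<alpha> # ts @ [\<alpha>])"
      by (simp add: refl_word_append fun_eq_iff root_nonzero[OF \<alpha>R] flip: ts(2))
    then show ?thesis using ts(1) \<alpha>(1) by (intro exI[of _ "\<alpha> # ts @ [\<alpha>]"]) simp
  qed
qed

lemma weyl_group_iff_word: "w \<in> W \<longleftrightarrow> (\<exists>ss. set ss \<subseteq> Sim \<and> w = refl_word ss)"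
proof
  assume "w \<in> W"
  then show "\<exists>ss. set ss \<subseteq> Sim \<and> w = refl_word ss"
  proof (induction w rule: weyl_group.induct)
    case weyl_id
    show ?case by (intro exI[of _ "[]"]) simp
  next
    case (weyl_step \<alpha> w)
    obtain ss where ss: "set ss \<subseteq> Sim" "w = refl_word ss"
      using weyl_step.IH by blast
    obtain ts where ts: "set ts \<subseteq> Sim" "root_refl \<alpha> = refl_word ts"
      using root_positive_or_negative[OF weyl_step.hyps(1)] root_refl_positive_word root_refl_uminus
      by metis
    have "root_refl \<alpha> \<circ> w = refl_word (ts @ ss)"
      by (simp add: refl_word_append ts(2) ss(2))
    then show ?case using ss(1) ts(1) by (intro exI[of _ "ts @ ss"]) simp
  qed
next
  assume "\<exists>ss. set ss \<subseteq> Sim \<and> w = refl_word ss"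
  then show "w \<in> W" using simple_refl_word_in_weyl_group by blast
qed

lemma len_eq_card_inversions: "w \<in> W \<Longrightarrow> len w = card (inversions w)"
  using len_refl_word_eq_card_inversions unfolding weyl_group_iff_word by auto

lemma weyl_group_comp: "u \<in> W \<Longrightarrow> v \<in> W \<Longrightarrow> u \<circ> v \<in> W"
  unfolding weyl_group_iff_word by (metis le_sup_iff refl_word_append set_append)

lemma refl_word_rev_comp: "set ss \<subseteq> Sim \<Longrightarrow> refl_word (rev ss) \<circ> refl_word ss = id"
proof (induction ss)
  case Nil
  then show ?case by simp
next
  case (Cons \<alpha> ss)
  then have "\<alpha> \<noteq> 0" using simple_root_root root_nonzero by auto
  with Cons show ?case by (simp add: refl_word_append fun_eq_iff)
qed

lemma inv_refl_word: "set ss \<subseteq> Sim \<Longrightarrow> inv (refl_word ss) = refl_word (rev ss)"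
  using inv_unique_comp refl_word_rev_comp[of ss] refl_word_rev_comp[of "rev ss"] by simp

lemma weyl_group_inv: "w \<in> W \<Longrightarrow> inv w \<in> W"
  unfolding weyl_group_iff_word by (metis inv_refl_word set_rev)

lemma len_inv_le:
  assumes "w \<in> W"
  shows "len (inv w) \<le> len w"
proof -
  obtain ss where "set ss \<subseteq> Sim" "w = refl_word ss"
    using assms weyl_group_iff_word by blast
  then obtain rs where rs: "set rs \<subseteq> Sim" "length rs = len w" "refl_word rs = w"
    using reduced_word_exists by metis
  then have "inv w = refl_word (rev rs)"
    using inv_refl_word by metis
  then show ?thesis
    using len_refl_word_le[of "rev rs"] rs by simp
qed

lemma len_inv: "w \<in> W \<Longrightarrow> len (inv w) = len w"
  using len_inv_le[of w] len_inv_le[of "inv w"] weyl_group_inv inv_inv_eq[OF bij_weyl]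
  by (metis le_antisym)

lemma len_eq_0_iff:
  assumes "w \<in> W"
  shows "len w = 0 \<longleftrightarrow> w = id"
proof
  obtain ss where "set ss \<subseteq> Sim" "w = refl_word ss"
    using assms weyl_group_iff_word by blast
  then obtain rs where rs: "length rs = len w" "refl_word rs = w"
    using reduced_word_exists by metis
  assume "len w = 0"
  with rs show "w = id" by simp
next
  assume "w = id"
  then show "len w = 0" using len_refl_word_le[of "[]"] by simp
qed

section \<open>The longest element\<close>

lemma max_length_inverts_positive:
  assumes w: "w \<in> W" and max: "\<forall>u\<in>W. len u \<le> len w" and \<beta>: "\<beta> \<in> Pos"
  shows "c \<bullet> w \<beta> < 0"
proof -
  have "(- c) \<bullet> w \<alpha> > 0" if \<alpha>: "\<alpha> \<in> Sim" for \<alpha>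
  proof (rule ccontr)
    have \<alpha>R: "\<alpha> \<in> R" using \<alpha> simple_root_root by blast
    assume "\<not> (- c) \<bullet> w \<alpha> > 0"
    then have "c \<bullet> w \<alpha> > 0"
      using inner_generic_root[OF weyl_maps_roots[OF w \<alpha>R]] by simp
    then have "len (w \<circ> root_refl \<alpha>) = len w + 1"
      using card_inversions_comp_simple(2)[OF w \<alpha>] len_eq_card_inversions w
        weyl_group_comp[OF w root_refl_in_weyl_group[OF \<alpha>R]] by simp
    then show False
      using max weyl_group_comp[OF w root_refl_in_weyl_group[OF \<alpha>R]] by fastforce
  qed
  moreover have "\<beta> \<noteq> 0" using \<beta> root_nonzero positive_roots_iff by auto
  ultimately show ?thesis
    using nat_combinations_inner_pos[OF positive_root_nat_combination[OF \<beta>]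
        orthogonal_transformation_linear[OF orthogonal_transformation_weyl[OF w]]]
    by fastforce
qed

lemma card_inversions_comp_inverting_all:
  assumes w: "w \<in> W" and all: "\<And>\<beta>. \<beta> \<in> Pos \<Longrightarrow> c \<bullet> w \<beta> < 0" and u: "u \<in> W"
  shows "card (inversions (u \<circ> w)) + card (inversions u) = card Pos"
proof -
  \<comment> \<open>\<open>f\<close> permutes \<open>Pos\<close> and carries the inversions of \<open>u \<circ> w\<close> onto the non-inversions of \<open>u\<close>.\<close>
  define f where "f \<beta> = - w \<beta>" for \<beta>
  have f_pos: "f \<beta> \<in> Pos" if "\<beta> \<in> Pos" for \<beta>
    using that all[OF that] uminus_root[OF weyl_maps_roots[OF w]]
    by (auto simp: f_def positive_roots_iff)
  have inj: "inj_on f Pos"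
    using orthogonal_transformation_inj[OF orthogonal_transformation_weyl[OF w]]
    by (auto simp: f_def inj_on_def inj_def)
  then have f_Pos: "f ` Pos = Pos"
    using endo_inj_surj[OF finite_positive_roots] f_pos by blast
  have flip: "\<beta> \<in> inversions (u \<circ> w) \<longleftrightarrow> f \<beta> \<in> Pos - inversions u" if "\<beta> \<in> Pos" for \<beta>
  proof -
    have "u (f \<beta>) = - u (w \<beta>)"
      using u by (simp add: f_def linear_neg orthogonal_transformation_linear
          orthogonal_transformation_weyl)
    moreover have "c \<bullet> u (w \<beta>) \<noteq> 0"
      using that weyl_maps_roots[OF u weyl_maps_roots[OF w]] inner_generic_root
      by (simp add: positive_roots_iff)
    ultimately have "c \<bullet> u (w \<beta>) < 0 \<longleftrightarrow> \<not> c \<bullet> u (f \<beta>) < 0"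
      by auto
    then show ?thesis
      using that f_pos[OF that] by (simp add: inversions_def)
  qed
  have "f ` inversions (u \<circ> w) = Pos - inversions u"
  proof
    show "f ` inversions (u \<circ> w) \<subseteq> Pos - inversions u"
    proof
      fix \<gamma>
      assume "\<gamma> \<in> f ` inversions (u \<circ> w)"
      then obtain \<beta> where "\<beta> \<in> inversions (u \<circ> w)" "\<gamma> = f \<beta>" by blast
      with flip[of \<beta>] inversions_subset show "\<gamma> \<in> Pos - inversions u" by auto
    qed
    show "Pos - inversions u \<subseteq> f ` inversions (u \<circ> w)"
    proof
      fix \<gamma>
      assume \<gamma>: "\<gamma> \<in> Pos - inversions u"
      then obtain \<beta> where "\<beta> \<in> Pos" "\<gamma> = f \<beta>" using f_Pos by blast
      with flip[of \<beta>] \<gamma> show "\<gamma> \<in> f ` inversions (u \<circ> w)" by auto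
    qed
  qed
  then have "card (inversions (u \<circ> w)) = card (Pos - inversions u)"
    by (metis card_image inj_on_subset[OF inj inversions_subset])
  then show ?thesis
    using card_Diff_subset[OF finite_inversions inversions_subset] card_inversions_le[of u] by simp
qed

lemma max_length_element_unique:
  assumes w1: "w1 \<in> W" "\<forall>u\<in>W. len u \<le> len w1" and w2: "w2 \<in> W" "\<forall>u\<in>W. len u \<le> len w2"
  shows "w1 = w2"
proof -
  define u where "u = w1 \<circ> inv w2"
  have u: "u \<in> W"
    using weyl_group_comp[OF w1(1) weyl_group_inv[OF w2(1)]] by (simp add: u_def)
  have uw2: "u \<circ> w2 = w1"
    using w2(1) by (simp add: u_def fun_eq_iff)
  have "inversions w1 = Pos"
    using max_length_inverts_positive[OF w1] inversions_subset by (auto simp: inversions_def)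
  then have "len u = 0"
    using card_inversions_comp_inverting_all[OF w2(1) max_length_inverts_positive[OF w2] u]
      len_eq_card_inversions[OF u] uw2 by simp
  then show ?thesis
    using len_eq_0_iff[OF u] uw2 by simp
qed

lemma longest_element_maximal: "w0 \<in> W \<and> (\<forall>u\<in>W. len u \<le> len w0)"
proof -
  have "\<exists>w. w \<in> W \<and> (\<forall>u. u \<in> W \<longrightarrow> len u \<le> len w)"
    using ex_has_greatest_nat[of "\<lambda>w. w \<in> W" id len "Suc (card Pos)"] weyl_group.weyl_id[of R]
      len_eq_card_inversions card_inversions_le by (simp add: le_imp_less_Suc)
  then have "\<exists>!w. w \<in> W \<and> (\<forall>u\<in>W. len u \<le> len w)"
    using max_length_element_unique by blast
  then show ?thesis
    unfolding longest_element_def by (rule theI')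
qed

lemma longest_in_weyl_group: "w0 \<in> W"
  using longest_element_maximal by blast

lemma len_le_longest: "u \<in> W \<Longrightarrow> len u \<le> len w0"
  using longest_element_maximal by blast

lemma eq_longest_if_len_eq: "w \<in> W \<Longrightarrow> len w = len w0 \<Longrightarrow> w = w0"
  using max_length_element_unique longest_element_maximal by (metis len_le_longest)

lemma len_comp_longest:
  assumes "u \<in> W"
  shows "len (u \<circ> w0) + len u = len w0"
proof -
  have all: "c \<bullet> w0 \<beta> < 0" if "\<beta> \<in> Pos" for \<beta>
    using max_length_inverts_positive longest_element_maximal that by blast
  then have "inversions w0 = Pos"
    using inversions_subset by (auto simp: inversions_def)
  then show ?thesis
    using card_inversions_comp_inverting_all[OF longest_in_weyl_group all assms]
      len_eq_card_inversions assms longest_in_weyl_group weyl_group_comp by simp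
qed

lemma longest_comp_longest: "w0 \<circ> w0 = id"
  using len_comp_longest[OF longest_in_weyl_group]
    len_eq_0_iff[OF weyl_group_comp[OF longest_in_weyl_group longest_in_weyl_group]] by simp

lemma longest_longest_apply [simp]: "w0 (w0 v) = v"
  using fun_cong[OF longest_comp_longest] by simp

lemma inv_longest: "inv w0 = w0"
  using inv_unique_comp[OF longest_comp_longest longest_comp_longest] .

lemma len_longest_comp:
  assumes "u \<in> W"
  shows "len (w0 \<circ> u) + len u = len w0"
proof -
  have "inv (w0 \<circ> u) = inv u \<circ> w0"
    using o_inv_distrib[OF bij_weyl[OF longest_in_weyl_group] bij_weyl[OF assms]] inv_longest
    by simp
  then have "len (w0 \<circ> u) = len (inv u \<circ> w0)"
    using len_inv[OF weyl_group_comp[OF longest_in_weyl_group assms]] by simp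
  then show ?thesis
    using len_comp_longest[OF weyl_group_inv[OF assms]] len_inv[OF assms] by simp
qed

lemma len_longest_conj: "u \<in> W \<Longrightarrow> len (w0 \<circ> u \<circ> w0) = len u"
  using len_comp_longest[OF weyl_group_comp[OF longest_in_weyl_group]] len_longest_comp
  by (metis add_right_cancel add.commute)

section \<open>Weak orders and splittings\<close>

lemma len_left_weak_quotient:
  assumes "v \<in> W" "left_weak_le R c v w"
  shows "len (v \<circ> inv w) + len v = len w"
proof -
  obtain z where z: "z \<in> W" "w = z \<circ> v" "len w = len z + len v"
    using assms(2) unfolding left_weak_le_def by blast
  have "v \<circ> inv w = inv z"
    using o_inv_distrib[OF bij_weyl[OF z(1)] bij_weyl[OF assms(1)]] assms(1)
    by (simp add: z(2) fun_eq_iff)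
  then show ?thesis
    using len_inv[OF z(1)] z(3) by simp
qed

lemma left_weak_le_inv:
  assumes "v \<in> W" "left_weak_le R c v w"
  shows "left_weak_le R c (v \<circ> inv w) (inv w)"
proof -
  have w: "w \<in> W"
    using assms weyl_group_comp unfolding left_weak_le_def by blast
  have "inv w = inv v \<circ> (v \<circ> inv w)"
    using assms(1) by (simp add: fun_eq_iff)
  moreover have "len (inv w) = len (inv v) + len (v \<circ> inv w)"
    using len_left_weak_quotient[OF assms] len_inv[OF w] len_inv[OF assms(1)] by simp
  ultimately show ?thesis
    unfolding left_weak_le_def using weyl_group_inv[OF assms(1)] by blast
qed

lemma right_weak_le_comp_longest:
  assumes "u \<in> W" "right_weak_le R c u v"
  shows "right_weak_le R c (v \<circ> w0) (u \<circ> w0)"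
proof -
  obtain z where z: "z \<in> W" "v = u \<circ> z" "len v = len u + len z"
    using assms(2) unfolding right_weak_le_def by blast
  have v: "v \<in> W"
    using weyl_group_comp[OF assms(1) z(1)] z(2) by simp
  define z' where "z' = w0 \<circ> inv z \<circ> w0"
  have "z' \<in> W"
    using weyl_group_comp weyl_group_inv longest_in_weyl_group z(1) by (simp add: z'_def)
  moreover have "u \<circ> w0 = (v \<circ> w0) \<circ> z'"
    using z(1) by (simp add: z'_def z(2) fun_eq_iff)
  moreover have "len (u \<circ> w0) = len (v \<circ> w0) + len z'"
    using len_comp_longest[OF assms(1)] len_comp_longest[OF v] z(3)
      len_longest_conj[OF weyl_group_inv[OF z(1)]] len_inv[OF z(1)]
    unfolding z'_def by linarith
  ultimately show ?thesis
    unfolding right_weak_le_def by blast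
qed

lemma splitting_decompose:
  assumes "splitting R c X Y" "w \<in> W"
  obtains x y where "x \<in> X" "y \<in> Y" "w = x \<circ> y"
proof -
  from assms have "w \<in> (\<lambda>(x, y). x \<circ> y) ` (X \<times> Y)"
    by (simp add: splitting_def bij_betw_def)
  then show thesis using that by auto
qed

lemma id_in_splitting:
  assumes split: "splitting R c X Y"
  shows "id \<in> X" "id \<in> Y"
proof -
  obtain x y where xy: "x \<in> X" "y \<in> Y" "id = x \<circ> y"
    using splitting_decompose[OF split weyl_group.weyl_id] by blast
  have "x \<in> W" "y \<in> W"
    using split xy(1,2) by (auto simp: splitting_def)
  moreover have "len x + len y = len (x \<circ> y)"
    using split xy(1,2) by (simp add: splitting_def)
  then have "len x + len y = 0"
    using len_eq_0_iff[OF weyl_group.weyl_id] by (simp add: xy(3)[symmetric])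
  ultimately have "x = id" "y = id"
    using len_eq_0_iff by auto
  with xy show "id \<in> X" "id \<in> Y" by simp_all
qed

lemma splitting_maxima_comp:
  assumes split: "splitting R c X Y"
    and x0: "x0 \<in> X" "\<forall>x\<in>X. left_weak_le R c x x0"
    and y0: "y0 \<in> Y" "\<forall>y\<in>Y. right_weak_le R c y y0"
  shows "x0 \<circ> y0 = w0"
proof -
  have add: "\<And>x y. x \<in> X \<Longrightarrow> y \<in> Y \<Longrightarrow> len (x \<circ> y) = len x + len y"
    and x0y0: "x0 \<circ> y0 \<in> W"
    using split x0(1) y0(1) weyl_group_comp by (auto simp: splitting_def)
  obtain x y where xy: "x \<in> X" "y \<in> Y" "w0 = x \<circ> y"
    using splitting_decompose[OF split longest_in_weyl_group] by blast
  have "len x \<le> len x0"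
    using x0(2) xy(1) unfolding left_weak_le_def by auto
  moreover have "len y \<le> len y0"
    using y0(2) xy(2) unfolding right_weak_le_def by auto
  ultimately have "len w0 \<le> len (x0 \<circ> y0)"
    using add[OF xy(1,2)] add[OF x0(1) y0(1)] unfolding xy(3) by linarith
  then have "len (x0 \<circ> y0) = len w0"
    using len_le_longest[OF x0y0] by linarith
  then show ?thesis
    using eq_longest_if_len_eq[OF x0y0] by blast
qed

lemma bij_betw_comp_shift:
  assumes bij: "bij_betw (\<lambda>(x, y). x \<circ> y) (X \<times> Y) W" and a: "a \<in> W" and b: "b \<in> W"
  shows "bij_betw (\<lambda>(x, y). x \<circ> y) ((\<lambda>x. x \<circ> inv a) ` X \<times> (\<lambda>y. a \<circ> y \<circ> b) ` Y) W"
proof -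
  let ?f = "\<lambda>x. x \<circ> inv a" and ?g = "\<lambda>y. a \<circ> y \<circ> b"
  have "inj_on ?f X"
    by (rule inj_on_inverseI[of _ "\<lambda>x. x \<circ> a"]) (simp add: fun_eq_iff a)
  moreover have "inj_on ?g Y"
    by (rule inj_on_inverseI[of _ "\<lambda>y. inv a \<circ> y \<circ> inv b"]) (simp add: fun_eq_iff a b)
  ultimately have shift: "bij_betw (map_prod ?f ?g) (X \<times> Y) (?f ` X \<times> ?g ` Y)"
    by (intro bij_betw_map_prod inj_on_imp_bij_betw)
  have "bij_betw (\<lambda>w. w \<circ> b) W W"
    by (rule bij_betw_byWitness[where f' = "\<lambda>w. w \<circ> inv b"])
      (auto simp: fun_eq_iff b intro: weyl_group_comp weyl_group_inv b)
  with bij have "bij_betw ((\<lambda>w. w \<circ> b) \<circ> (\<lambda>(x, y). x \<circ> y)) (X \<times> Y) W"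
    by (rule bij_betw_trans)
  then have "bij_betw ((\<lambda>(x, y). x \<circ> y) \<circ> map_prod ?f ?g) (X \<times> Y) W"
    by (rule bij_betw_cong[THEN iffD1, rotated]) (auto simp: fun_eq_iff a)
  then show ?thesis
    using bij_betw_comp_iff[OF shift] by blast
qed

lemma splitting_shift:
  assumes split: "splitting R c X Y" and x0: "x0 \<in> X" and max: "\<forall>x\<in>X. left_weak_le R c x x0"
  shows "splitting R c ((\<lambda>u. u \<circ> inv x0) ` X) ((\<lambda>u. x0 \<circ> u \<circ> w0) ` Y)"
proof -
  have XW: "X \<subseteq> W" and YW: "Y \<subseteq> W" and bij: "bij_betw (\<lambda>(x, y). x \<circ> y) (X \<times> Y) W"
    and add: "\<And>x y. x \<in> X \<Longrightarrow> y \<in> Y \<Longrightarrow> len (x \<circ> y) = len x + len y"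
    using split by (auto simp: splitting_def)
  have x0W: "x0 \<in> W" using x0 XW by blast
  have len_x: "len (x \<circ> inv x0) + len x = len x0" if "x \<in> X" for x
    using len_left_weak_quotient that XW max by blast
  have len_xy: "len (x \<circ> y \<circ> w0) + len x + len y = len w0" if "x \<in> X" "y \<in> Y" for x y
    using len_comp_longest[of "x \<circ> y"] add[OF that] that XW YW weyl_group_comp by fastforce
  have cancel: "x \<circ> inv x0 \<circ> (x0 \<circ> y \<circ> w0) = x \<circ> y \<circ> w0" for x y
    using x0W by (simp add: fun_eq_iff)
  show ?thesis
    unfolding splitting_def
  proof (intro conjI ballI)
    show "(\<lambda>u. u \<circ> inv x0) ` X \<subseteq> W"
      using XW x0W weyl_group_comp weyl_group_inv by blast
    show "(\<lambda>u. x0 \<circ> u \<circ> w0) ` Y \<subseteq> W"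
      using YW x0W weyl_group_comp longest_in_weyl_group by blast
    show "bij_betw (\<lambda>(x, y). x \<circ> y) ((\<lambda>u. u \<circ> inv x0) ` X \<times> (\<lambda>u. x0 \<circ> u \<circ> w0) ` Y) W"
      using bij_betw_comp_shift[OF bij x0W longest_in_weyl_group] .
    fix a b
    assume "a \<in> (\<lambda>u. u \<circ> inv x0) ` X" "b \<in> (\<lambda>u. x0 \<circ> u \<circ> w0) ` Y"
    then obtain x y where xy: "x \<in> X" "y \<in> Y" "a = x \<circ> inv x0" "b = x0 \<circ> y \<circ> w0"
      by blast
    show "len (a \<circ> b) = len a + len b"
      using len_xy[OF xy(1,2)] len_xy[OF x0 xy(2)] len_x[OF xy(1)]
      unfolding xy(3,4) cancel by linarith
  qed
qed

lemma splitting_shift_maxima: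
  assumes split: "splitting R c X Y" and x0: "x0 \<in> X" and max: "\<forall>x\<in>X. left_weak_le R c x x0"
  shows "inv x0 \<in> (\<lambda>u. u \<circ> inv x0) ` X"
    and "\<forall>a\<in>(\<lambda>u. u \<circ> inv x0) ` X. left_weak_le R c a (inv x0)"
    and "x0 \<circ> w0 \<in> (\<lambda>u. x0 \<circ> u \<circ> w0) ` Y"
    and "\<forall>b\<in>(\<lambda>u. x0 \<circ> u \<circ> w0) ` Y. right_weak_le R c b (x0 \<circ> w0)"
proof -
  have XW: "X \<subseteq> W" and YW: "Y \<subseteq> W"
    and add: "\<And>x y. x \<in> X \<Longrightarrow> y \<in> Y \<Longrightarrow> len (x \<circ> y) = len x + len y"
    using split by (auto simp: splitting_def)
  show "inv x0 \<in> (\<lambda>u. u \<circ> inv x0) ` X"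
    by (rule image_eqI[of _ _ id]) (simp_all add: id_in_splitting[OF split])
  show "x0 \<circ> w0 \<in> (\<lambda>u. x0 \<circ> u \<circ> w0) ` Y"
    by (rule image_eqI[of _ _ id]) (simp_all add: id_in_splitting[OF split])
  show "\<forall>a\<in>(\<lambda>u. u \<circ> inv x0) ` X. left_weak_le R c a (inv x0)"
    using left_weak_le_inv max XW by blast
  show "\<forall>b\<in>(\<lambda>u. x0 \<circ> u \<circ> w0) ` Y. right_weak_le R c b (x0 \<circ> w0)"
  proof
    fix b
    assume "b \<in> (\<lambda>u. x0 \<circ> u \<circ> w0) ` Y"
    then obtain y where y: "y \<in> Y" "b = x0 \<circ> y \<circ> w0" by blast
    have "right_weak_le R c x0 (x0 \<circ> y)"
      unfolding right_weak_le_def using y(1) YW add[OF x0 y(1)] by blast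
    then show "right_weak_le R c b (x0 \<circ> w0)"
      using right_weak_le_comp_longest x0 XW y(2) by blast
  qed
qed

end

theorem proposition6p2:
  fixes R :: "'a::euclidean_space set" and c :: 'a
    and X Y :: "('a \<Rightarrow> 'a) set" and x0 y0 :: "'a \<Rightarrow> 'a"
  assumes "crystallographic_root_system R"
    and "generic_vector R c"
    and "splitting R c X Y"
    and "x0 \<in> X" and "\<forall>x\<in>X. left_weak_le R c x x0"
    and "y0 \<in> Y" and "\<forall>y\<in>Y. right_weak_le R c y y0"
  shows "let w0 = longest_element R c;
             \<phi> = (\<lambda>u. u \<circ> inv x0);
             \<psi> = (\<lambda>u. x0 \<circ> u \<circ> w0)
         in x0 \<circ> y0 = w0
          \<and> (\<forall>u. \<psi> u = w0 \<circ> inv y0 \<circ> u \<circ> w0)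
          \<and> splitting R c (\<phi> ` X) (\<psi> ` Y)
          \<and> inv x0 \<in> \<phi> ` X \<and> (\<forall>x\<in>\<phi> ` X. left_weak_le R c x (inv x0))
          \<and> x0 \<circ> w0 \<in> \<psi> ` Y \<and> (\<forall>y\<in>\<psi> ` Y. right_weak_le R c y (x0 \<circ> w0))
          \<and> x0 \<circ> w0 = w0 \<circ> inv y0 \<circ> w0"
proof -
  interpret root_system R c
    using assms(1,2) by unfold_locales
  have x0y0: "x0 \<circ> y0 = w0"
    using splitting_maxima_comp[OF assms(3-7)] .
  have y0: "y0 \<in> W"
    using assms(3,6) by (auto simp: splitting_def)
  have "x0 = w0 \<circ> inv y0"
  proof
    fix v
    show "x0 v = (w0 \<circ> inv y0) v"
      using fun_cong[OF x0y0, of "inv y0 v"] y0 by simp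
  qed
  then have "\<forall>u. x0 \<circ> u \<circ> w0 = w0 \<circ> inv y0 \<circ> u \<circ> w0" "x0 \<circ> w0 = w0 \<circ> inv y0 \<circ> w0"
    by simp_all
  then show ?thesis
    using x0y0 splitting_shift[OF assms(3-5)] splitting_shift_maxima[OF assms(3-5)]
    unfolding Let_def by (intro conjI) simp_all
qed

end
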